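(* Let $I,J\in\mathbb Z$ with $4I^3\ne J^2$, and let \[ g(a,c,d)=(I-12d+3ac)(96d+3ac-2I)^2-(J+27c^2+27a^2d)^2 . \] Then the affine surface $Y_{I,J}\subset\mathbb A^3$ defined by $g(a,c,d)=0$ contains no rational lines, i.e. there is no set $\{(\alpha,\gamma,\delta)+t(A,C,D): t\in\mathbb Q\}$ with $(\alpha,\gamma,\delta)\in\mathbb Q^3$ and $(A,C,D)\in\mathbb Q^3\setminus\{\mathbf 0\}$ contained in the zero set of $g$. *)

theory Defs
  imports Main "HOL.Rat"
begin

definition g_IJ :: "int \<Rightarrow> int \<Rightarrow> rat \<Rightarrow> rat \<Rightarrow> rat \<Rightarrow> rat" where
  "g_IJ I J a c d =
     (of_int I - 12 * d + 3 * a * c) * (96 * d + 3 * a * c - 2 * of_int I)^2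
     - (of_int J + 27 * c^2 + 27 * a^2 * d)^2"

end

theory Submission
  imports Defs "HOL-Computational_Algebra.Polynomial_Factorial"
    "HOL-Computational_Algebra.Field_as_Ring"
begin

text \<open>Write g = P Q^2 - R^2. Along a rational line, P, Q, R become polynomials in the
parameter t of degrees at most 2, 2, 3 with P Q^2 = R^2 in Q[t]. Since Q[t] is factorial,
either Q = R = 0 or P = h^2 and R = h Q for a linear h = p + q t. If a is constant along the
line, comparing coefficients forces the direction to vanish; otherwise we may take a = t, and
the coefficient equations force 4 I^3 = J^2.\<close>

lemma mult_square_eq_squareE:
  fixes a b c :: "'a :: {semiring_gcd, idom}"
  assumes "a * b^2 = c^2" and "b \<noteq> 0"
  obtains h where "a = h^2" and "c = h * b"
proof -
  have "b^2 dvd c^2" using assms(1) by (metis dvd_triv_right)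
  then obtain h where c: "c = b * h" by auto
  then have "a * b^2 = h^2 * b^2" using assms(1) by (simp add: power_mult_distrib)
  with assms(2) have "a = h^2" by simp
  with c show thesis by (simp add: mult.commute that)
qed

lemma degree_square_le_2E:
  fixes h :: "'a :: idom poly"
  assumes "degree (h^2) \<le> 2"
  obtains p q where "h = [:p, q:]"
proof -
  have "degree h \<le> 1"
    using assms by (cases "h = 0") (auto simp: degree_power_eq)
  then have "h = [:coeff h 0, coeff h 1:]"
    by (auto simp: poly_eq_iff coeff_pCons coeff_eq_0 split: nat.split)
  then show thesis by (rule that)
qed

definition gP :: "int \<Rightarrow> 'a \<Rightarrow> 'a \<Rightarrow> 'a \<Rightarrow> 'a :: comm_ring_1" where
  "gP I a c d = of_int I - 12 * d + 3 * a * c"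

definition gQ :: "int \<Rightarrow> 'a \<Rightarrow> 'a \<Rightarrow> 'a \<Rightarrow> 'a :: comm_ring_1" where
  "gQ I a c d = 96 * d + 3 * a * c - 2 * of_int I"

definition gR :: "int \<Rightarrow> 'a \<Rightarrow> 'a \<Rightarrow> 'a \<Rightarrow> 'a :: comm_ring_1" where
  "gR J a c d = of_int J + 27 * c^2 + 27 * a^2 * d"

lemma g_IJ_eq: "g_IJ I J a c d = gP I a c d * (gQ I a c d)^2 - (gR J a c d)^2"
  by (simp add: g_IJ_def gP_def gQ_def gR_def)

lemma poly_gP [simp]: "poly (gP I a c d) t = gP I (poly a t) (poly c t) (poly d t)"
  by (simp add: gP_def)

lemma poly_gQ [simp]: "poly (gQ I a c d) t = gQ I (poly a t) (poly c t) (poly d t)"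
  by (simp add: gQ_def)

lemma poly_gR [simp]: "poly (gR J a c d) t = gR J (poly a t) (poly c t) (poly d t)"
  by (simp add: gR_def)

lemma gP_linear:
  "gP I [:\<alpha>, A:] [:\<gamma>, C:] [:\<delta>, D:] =
     [:of_int I - 12 * \<delta> + 3 * \<alpha> * \<gamma>, 3 * (\<alpha> * C + \<gamma> * A) - 12 * D, 3 * A * C:]"
  by (simp add: gP_def of_int_poly numeral_poly algebra_simps)

lemma gQ_linear:
  "gQ I [:\<alpha>, A:] [:\<gamma>, C:] [:\<delta>, D:] =
     [:96 * \<delta> + 3 * \<alpha> * \<gamma> - 2 * of_int I, 96 * D + 3 * (\<alpha> * C + \<gamma> * A), 3 * A * C:]"
  by (simp add: gQ_def of_int_poly numeral_poly algebra_simps)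

lemma gR_linear:
  "gR J [:\<alpha>, A:] [:\<gamma>, C:] [:\<delta>, D:] =
     [:of_int J + 27 * \<gamma>^2 + 27 * \<alpha>^2 * \<delta>,
       54 * \<gamma> * C + 27 * (\<alpha>^2 * D + 2 * \<alpha> * A * \<delta>),
       27 * C^2 + 27 * (A^2 * \<delta> + 2 * \<alpha> * A * D),
       27 * A^2 * D:]"
  by (simp add: gR_def of_int_poly numeral_poly power2_eq_square algebra_simps)

lemma line_on_surface_cases:
  fixes \<alpha> A \<gamma> C \<delta> D :: rat
  assumes on_surface: "\<forall>t. g_IJ I J (\<alpha> + t * A) (\<gamma> + t * C) (\<delta> + t * D) = 0"
  defines "a \<equiv> [:\<alpha>, A:]" and "c \<equiv> [:\<gamma>, C:]" and "d \<equiv> [:\<delta>, D:]"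
  shows "gQ I a c d = 0 \<and> gR J a c d = 0 \<or>
    (\<exists>p q. gP I a c d = [:p, q:]^2 \<and> gR J a c d = [:p, q:] * gQ I a c d)"
proof -
  have "poly (gP I a c d * (gQ I a c d)^2 - (gR J a c d)^2) t = 0" for t
    using on_surface[rule_format, of t] by (simp add: a_def c_def d_def g_IJ_eq algebra_simps)
  then have identity: "gP I a c d * (gQ I a c d)^2 = (gR J a c d)^2"
    using poly_all_0_iff_0 by (metis eq_iff_diff_eq_0)
  show ?thesis
  proof (cases "gQ I a c d = 0")
    case True
    with identity show ?thesis by simp
  next
    case False
    with identity obtain h where h: "gP I a c d = h^2" "gR J a c d = h * gQ I a c d"
      by (rule mult_square_eq_squareE)
    have "degree (h^2) \<le> 2"
      unfolding h(1)[symmetric] a_def c_def d_def gP_linear by (simp add: degree_pCons_le)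
    then obtain p q where "h = [:p, q:]" by (rule degree_square_le_2E)
    with h show ?thesis by blast
  qed
qed

lemma line_on_surface_with_constant_a:
  fixes \<alpha> \<gamma> C \<delta> D :: rat
  assumes "\<forall>t. g_IJ I J \<alpha> (\<gamma> + t * C) (\<delta> + t * D) = 0"
  shows "C = 0 \<and> D = 0"
proof -
  have "\<forall>t. g_IJ I J (\<alpha> + t * 0) (\<gamma> + t * C) (\<delta> + t * D) = 0"
    using assms by simp
  from line_on_surface_cases[OF this, unfolded gP_linear gQ_linear gR_linear]
  show ?thesis by (auto simp: power2_eq_square)
qed

text \<open>Solving the first three equations and the last one for \<delta>, \<gamma>, C, D, the remaining two
say I = s^2 and J = -2 s^3 with s = p + 2 q^2 / 3.\<close>

lemma disc_eq_0_of_line_coefficients: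
  fixes I J p q C D \<gamma> \<delta> :: "'a :: field_char_0"
  assumes "I - 12 * \<delta> = p^2" and "3 * \<gamma> - 12 * D = 2 * p * q" and "3 * C = q^2"
    and "J + 27 * \<gamma>^2 = p * (96 * \<delta> - 2 * I)"
    and "27 * C^2 + 27 * \<delta> = q * (96 * D + 3 * \<gamma>) + p * q^2"
    and "27 * D = q^3"
  shows "4 * I^3 = J^2"
  using assms by algebra

lemma line_on_surface_parametrized_by_a:
  fixes \<gamma> C \<delta> D :: rat
  assumes "\<forall>t. g_IJ I J t (\<gamma> + t * C) (\<delta> + t * D) = 0"
  shows "4 * I^3 = J^2"
proof -
  let ?a = "[:0, 1:]" and ?c = "[:\<gamma>, C:]" and ?d = "[:\<delta>, D:]"
  have "\<forall>t. g_IJ I J (0 + t * 1) (\<gamma> + t * C) (\<delta> + t * D) = 0"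
    using assms by simp
  from line_on_surface_cases[OF this]
  have "4 * of_int I^3 = (of_int J^2 :: rat)"
  proof (elim disjE exE conjE)
    assume "gQ I ?a ?c ?d = 0" and "gR J ?a ?c ?d = 0"
    then show ?thesis unfolding gQ_linear gR_linear by simp
  next
    fix p q
    assume "gP I ?a ?c ?d = [:p, q:]^2" and "gR J ?a ?c ?d = [:p, q:] * gQ I ?a ?c ?d"
    then show ?thesis unfolding gP_linear gQ_linear gR_linear
      by (intro disc_eq_0_of_line_coefficients[of _ \<delta> p \<gamma> D q C])
        (simp_all add: power2_eq_square power3_eq_cube algebra_simps)
  qed
  then have "of_int (4 * I^3) = (of_int (J^2) :: rat)" by simp
  then show ?thesis by (simp only: of_int_eq_iff)
qed

theorem lemma6p1:
  fixes I J :: int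
  assumes "4 * I^3 \<noteq> J^2"
  shows "\<not> (\<exists>\<alpha> \<gamma> \<delta> A C D :: rat. (A, C, D) \<noteq> (0, 0, 0) \<and>
            (\<forall>t :: rat. g_IJ I J (\<alpha> + t * A) (\<gamma> + t * C) (\<delta> + t * D) = 0))"
proof
  assume "\<exists>\<alpha> \<gamma> \<delta> A C D :: rat. (A, C, D) \<noteq> (0, 0, 0) \<and>
            (\<forall>t :: rat. g_IJ I J (\<alpha> + t * A) (\<gamma> + t * C) (\<delta> + t * D) = 0)"
  then obtain \<alpha> \<gamma> \<delta> A C D :: rat where direction: "(A, C, D) \<noteq> (0, 0, 0)"
    and on_surface: "\<forall>t. g_IJ I J (\<alpha> + t * A) (\<gamma> + t * C) (\<delta> + t * D) = 0" by blast
  show False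
  proof (cases "A = 0")
    case True
    with on_surface have "\<forall>t. g_IJ I J \<alpha> (\<gamma> + t * C) (\<delta> + t * D) = 0" by simp
    then have "C = 0 \<and> D = 0" by (rule line_on_surface_with_constant_a)
    with True direction show False by simp
  next
    case False
    have "g_IJ I J s (\<gamma> - \<alpha> * C / A + s * (C / A)) (\<delta> - \<alpha> * D / A + s * (D / A)) = 0" for s
      using on_surface[rule_format, of "(s - \<alpha>) / A"] False by (simp add: field_simps)
    then have "4 * I^3 = J^2" by (intro line_on_surface_parametrized_by_a) blast
    with assms show False by simp
  qed
qed

end
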